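(* Let $a,b\in\mathcal{A}$ be distinct with $p_a>0$ and $p_b>0$, and let $S$ be a scoring function. Assume there exist constants $\Delta>0$ and $\alpha>0$ such that for all $n$ large enough $$P\left(E[\tilde{L}_n(S)-L_n(S)\mid X,Y]\geq\Delta\right)\geq 1-n^{-\alpha\ln(n)}.$$ Then $\mathrm{VAR}[L_n(S)]=\Theta(n)$, i.e. there are constants $0<c\le C$ with $cn\le \mathrm{VAR}[L_n(S)]\le Cn$ for all $n$ large enough.
   Context: Let $\mathcal{A}$ be a finite alphabet and $\mathcal{A}^*=\mathcal{A}\cup\{G\}$, where $G$ is a gap symbol. A scoring function is a symmetric map $S:\mathcal{A}^*\times\mathcal{A}^*\to\mathbb{R}$. For strings $x=x_1\dots x_m$, $y=y_1\dots y_{m'}$ over $\mathcal{A}$, an alignment $\pi$ is a sequence $((\mu_1,\nu_1),\dots,(\mu_k,\nu_k))$, $k\ge0$, with $1\le\mu_1<\dots<\mu_k\le m$ and $1\le\nu_1<\dots<\nu_k\le m'$; its score is $S_\pi(x,y)=\sum_{i=1}^k S(x_{\mu_i},y_{\nu_i})+\sum_{j\notin\{\mu_i\}}S(x_j,G)+\sum_{j\notin\{\nu_i\}}S(G,y_j)$, and $L_S(x,y)=\max_\pi S_\pi(x,y)$. Let $X=X_1\dots X_n$, $Y=Y_1\dots Y_n$ where all $2n$ letters are i.i.d. with $P(X_i=c)=P(Y_j=c)=p_c$. Put $L_n(S)=L_S(X,Y)$. For fixed distinct $a,b$, let $N_a$ be the total number of occurrences of $a$ in $X$ and $Y$ combined;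 if $N_a\ge1$, choose one of these occurrences uniformly at random and replace it by $b$, giving $(\tilde X,\tilde Y)$ (if $N_a=0$ set $(\tilde X,\tilde Y)=(X,Y)$), and let $\tilde L_n(S)=L_S(\tilde X,\tilde Y)$. *)

theory Defs
  imports "HOL-Probability.Probability"
begin

text \<open>Alphabet: a finite type 'a. The extended alphabet with the gap symbol G is
 'a option, where None plays the role of G and Some c the letter c.\<close>

definition symmetric_score :: "('a option \<Rightarrow> 'a option \<Rightarrow> real) \<Rightarrow> bool" where
  "symmetric_score S \<longleftrightarrow> (\<forall>u v. S u v = S v u)"

definition alignments :: "nat \<Rightarrow> nat \<Rightarrow> (nat \<times> nat) list set" where
  "alignments m m' = {\<pi>. sorted_wrt (\<lambda>(i,j) (k,l). i < k \<and> j < l) \<pi> \<and>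
                         (\<forall>(i,j)\<in>set \<pi>. i < m \<and> j < m')}"

definition align_score ::
  "('a option \<Rightarrow> 'a option \<Rightarrow> real) \<Rightarrow> 'a list \<Rightarrow> 'a list \<Rightarrow> (nat \<times> nat) list \<Rightarrow> real" where
  "align_score S x y \<pi> =
     (\<Sum>(i,j)\<leftarrow>\<pi>. S (Some (x!i)) (Some (y!j)))
   + (\<Sum>i\<in>{..<length x} - fst ` set \<pi>. S (Some (x!i)) None)
   + (\<Sum>j\<in>{..<length y} - snd ` set \<pi>. S None (Some (y!j)))"

definition opt_score :: "('a option \<Rightarrow> 'a option \<Rightarrow> real) \<Rightarrow> 'a list \<Rightarrow> 'a list \<Rightarrow> real" where
  "opt_score S x y = Max (align_score S x y ` alignments (length x) (length y))"

fun word_pmf :: "'a pmf \<Rightarrow> nat \<Rightarrow> 'a list pmf" where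
  "word_pmf D 0 = return_pmf []"
| "word_pmf D (Suc n) = bind_pmf D (\<lambda>c. map_pmf (Cons c) (word_pmf D n))"

definition XY_pmf :: "'a pmf \<Rightarrow> nat \<Rightarrow> ('a list \<times> 'a list) pmf" where
  "XY_pmf D n = pair_pmf (word_pmf D n) (word_pmf D n)"

definition occurrences :: "'a \<Rightarrow> 'a list \<Rightarrow> 'a list \<Rightarrow> (nat + nat) set" where
  "occurrences a x y = Inl ` {i. i < length x \<and> x!i = a} \<union> Inr ` {j. j < length y \<and> y!j = a}"

definition replace_at :: "'a \<Rightarrow> 'a list \<Rightarrow> 'a list \<Rightarrow> nat + nat \<Rightarrow> 'a list \<times> 'a list" where
  "replace_at b x y k = (case k of Inl i \<Rightarrow> (x[i := b], y) | Inr j \<Rightarrow> (x, y[j := b]))"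

text \<open>Conditional distribution of (X~,Y~) given (X,Y)=(x,y).\<close>
definition perturb_pmf :: "'a \<Rightarrow> 'a \<Rightarrow> 'a list \<Rightarrow> 'a list \<Rightarrow> ('a list \<times> 'a list) pmf" where
  "perturb_pmf a b x y =
     (if occurrences a x y = {} then return_pmf (x, y)
      else map_pmf (replace_at b x y) (pmf_of_set (occurrences a x y)))"

text \<open>E[L~_n(S) - L_n(S) | X = x, Y = y].\<close>
definition cond_increment ::
  "('a option \<Rightarrow> 'a option \<Rightarrow> real) \<Rightarrow> 'a \<Rightarrow> 'a \<Rightarrow> 'a list \<Rightarrow> 'a list \<Rightarrow> real" where
  "cond_increment S a b x y =
     measure_pmf.expectation (perturb_pmf a b x y) (\<lambda>(x', y'). opt_score S x' y' - opt_score S x y)"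

end

theory Submission
  imports Defs
begin

text \<open>
  Upper bound: changing one letter changes the score of every alignment, hence the optimal score
  \<open>L\<^sub>n\<close>, by at most \<open>4K\<close>, where \<open>K\<close> bounds \<open>\<bar>S\<bar>\<close>; the Efron--Stein inequality over the \<open>2n\<close>
  independent letters gives \<open>VAR L\<^sub>n \<le> 2n (4K)\<^sup>2\<close>.

  Lower bound: writing \<open>b\<close> instead of \<open>a\<close> at a fixed position maps the configurations with \<open>a\<close>
  there onto those with \<open>b\<close> there and multiplies probabilities by \<open>p\<^sub>b / p\<^sub>a\<close>. Summed over all
  positions, this change of measure gives for every statistic \<open>g\<close>
    \<open>E[\<Sum>\<^sub>k (g(replace k) - g)] = E[W g]\<close>,  \<open>W = (p\<^sub>a / p\<^sub>b) N\<^sub>b - N\<^sub>a\<close>,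
  where \<open>k\<close> runs over the occurrences of \<open>a\<close> and \<open>N\<^sub>c\<close> counts the letters \<open>c\<close> in \<open>X\<close> and \<open>Y\<close>.
  For \<open>g = L\<^sub>n\<close> the left side is \<open>E[N\<^sub>a E[L\<^sub>n' - L\<^sub>n | X, Y]]\<close>, which the hypothesis (with the
  increment bounded by \<open>4K\<close>) makes at least \<open>n \<Delta> p\<^sub>a\<close>. For \<open>g = 1\<close> and \<open>g = W\<close> it gives
  \<open>E W = 0\<close> and \<open>E W\<^sup>2 = 2n p\<^sub>a (1 + p\<^sub>a / p\<^sub>b)\<close>, so by Cauchy--Schwarz
  \<open>VAR L\<^sub>n \<ge> E[W L\<^sub>n]\<^sup>2 / E W\<^sup>2 \<ge> c n\<close>.
\<close>

definition words :: "nat \<Rightarrow> 'a list set" where "words n = {xs. length xs = n}"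

definition word_weight :: "'a pmf \<Rightarrow> 'a list \<Rightarrow> real" where "word_weight D xs = prod_list (map (pmf D) xs)"

lemma finite_words: "finite (words n :: 'a::finite list set)"
  using finite_lists_length_eq[of "UNIV::'a set" n] by (simp add: words_def)

lemma word_weight_Nil[simp]: "word_weight D [] = 1"
  by (simp add: word_weight_def)

lemma word_weight_Cons[simp]: "word_weight D (c # xs) = pmf D c * word_weight D xs"
  by (simp add: word_weight_def)

lemma word_weight_append: "word_weight D (xs @ ys) = word_weight D xs * word_weight D ys"
  by (simp add: word_weight_def)

lemma word_weight_nonneg: "word_weight D xs \<ge> 0"
  by (induction xs) auto

lemma pmf_word_pmf: "pmf (word_pmf D n) xs = (if length xs = n then word_weight D xs else 0)"
proof (induction n arbitrary: xs)
  case 0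
  then show ?case by (auto simp: word_weight_def)
next
  case (Suc n)
  show ?case
  proof (cases xs)
    case Nil
    have "pmf (word_pmf D (Suc n)) [] = 0"
      by (auto simp: pmf_eq_0_set_pmf)
    then show ?thesis using Nil by simp
  next
    case (Cons d ys)
    have "pmf (map_pmf (Cons c) (word_pmf D n)) (d # ys) = (if c = d then pmf (word_pmf D n) ys else 0)" for c
    proof (cases "c = d")
      case True then show ?thesis using pmf_map_inj'[of "Cons c" "word_pmf D n" ys] by (simp add: inj_def)
    next
      case False then show ?thesis by (auto simp: pmf_eq_0_set_pmf)
    qed
    then have "pmf (word_pmf D (Suc n)) xs = (\<integral>c. (if c = d then pmf (word_pmf D n) ys else 0) \<partial>measure_pmf D)"
      using Cons by (simp add: pmf_bind)
    also have "\<dots> = (\<integral>c. indicator {d} c * pmf (word_pmf D n) ys \<partial>measure_pmf D)"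
      by (intro Bochner_Integration.integral_cong) (auto simp: indicator_def)
    also have "\<dots> = pmf D d * pmf (word_pmf D n) ys"
      by (simp add: measure_pmf_single)
    finally show ?thesis using Suc Cons by (simp add: word_weight_def)
  qed
qed

lemma sum_pmf_UNIV: "(\<Sum>c\<in>(UNIV::'a::finite set). pmf D c) = 1"
  by (rule sum_pmf_eq_1) auto

lemma sum_words_Suc:
  "(\<Sum>x\<in>words (Suc n). h x) = (\<Sum>c\<in>(UNIV::'a::finite set). \<Sum>z\<in>words n. h (c # z))"
proof -
  have eq: "words (Suc n) = (\<lambda>(c,z). c # z) ` (UNIV \<times> words n)"
    by (auto simp: words_def length_Suc_conv image_iff)
  have inj: "inj_on (\<lambda>(c,z). c # z) (UNIV \<times> (words n :: 'a list set))"
    by (auto simp: inj_on_def)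
  have "(\<Sum>x\<in>words (Suc n). h x) = (\<Sum>p\<in>UNIV \<times> words n. h (fst p # snd p))"
    by (subst eq, subst sum.reindex[OF inj]) (simp add: split_beta)
  also have "\<dots> = (\<Sum>c\<in>UNIV. \<Sum>z\<in>words n. h (c # z))"
    by (simp add: sum.cartesian_product split_beta)
  finally show ?thesis .
qed

lemma sum_word_weight: "(\<Sum>x\<in>words n. word_weight D x) = (1::real)" for D :: "'a::finite pmf"
proof (induction n)
  case 0
  have "words 0 = {[] :: 'a list}" by (auto simp: words_def)
  then show ?case by simp
next
  case (Suc n)
  have "(\<Sum>x\<in>words (Suc n). word_weight D x) = (\<Sum>c\<in>UNIV. pmf D c * (\<Sum>z\<in>words n. word_weight D z))"
    by (simp add: sum_words_Suc sum_distrib_left)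
  then show ?case using Suc by (simp add: sum_pmf_UNIV)
qed

lemma sum_word_weight_nth:
  fixes D :: "'a::finite pmf"
  shows "i < n \<Longrightarrow> (\<Sum>x\<in>words n. if x ! i = c then word_weight D x else 0) = pmf D c"
proof (induction n arbitrary: i)
  case 0 then show ?case by simp
next
  case (Suc n)
  show ?case
  proof (cases i)
    case 0
    have "(\<Sum>x\<in>words (Suc n). if x ! i = c then word_weight D x else 0)
        = (\<Sum>d\<in>UNIV. \<Sum>z\<in>words n. if d = c then word_weight D (d # z) else 0)"
      using 0 by (simp add: sum_words_Suc)
    also have "\<dots> = (\<Sum>d\<in>UNIV. if d = c then pmf D d * (\<Sum>z\<in>words n. word_weight D z) else 0)"
      by (intro sum.cong refl) (simp add: sum_distrib_left)
    also have "\<dots> = pmf D c" by (simp add: sum_word_weight)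
    finally show ?thesis .
  next
    case (Suc j)
    have "(\<Sum>x\<in>words (Suc n). if x ! i = c then word_weight D x else 0)
        = (\<Sum>d\<in>UNIV. pmf D d * (\<Sum>z\<in>words n. if z ! j = c then word_weight D z else 0))"
      using Suc by (simp add: sum_words_Suc sum_distrib_left if_distrib cong: if_cong)
    also have "\<dots> = pmf D c" using Suc.IH[of j] Suc.prems Suc by (simp add: sum_pmf_UNIV flip: sum_distrib_right)
    finally show ?thesis .
  qed
qed

lemma word_weight_list_update:
  "i < length xs \<Longrightarrow> word_weight D (xs[i := v]) * pmf D (xs ! i) = word_weight D xs * pmf D v"
proof (induction xs arbitrary: i)
  case Nil then show ?case by simp
next
  case (Cons x xs)
  then show ?case by (cases i) (auto simp: mult_ac)
qed

text \<open>Change of measure: writing \<open>b\<close> instead of \<open>a\<close> at position \<open>i\<close> is a bijection from the words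
  with \<open>a\<close> there onto those with \<open>b\<close> there, and it multiplies the weight by \<open>p\<^sub>b / p\<^sub>a\<close>.\<close>

lemma sum_words_replace_letter:
  fixes D :: "'a::finite pmf"
  assumes "i < n" "a \<noteq> b" "pmf D b > 0"
  shows "(\<Sum>x\<in>words n. if x ! i = a then word_weight D x * G (x[i := b]) else 0)
       = (pmf D a / pmf D b) * (\<Sum>x\<in>words n. if x ! i = b then word_weight D x * G x else 0)"
proof -
  let ?A = "{x\<in>words n. x ! i = a}" and ?B = "{x\<in>words n. x ! i = b}"
  have "(\<Sum>x\<in>words n. if x ! i = a then word_weight D x * G (x[i := b]) else 0) = (\<Sum>x\<in>?A. word_weight D x * G (x[i := b]))"
    by (simp add: sum.If_cases finite_words Int_def conj_commute)
  also have "\<dots> = (\<Sum>y\<in>?B. (pmf D a / pmf D b) * (word_weight D y * G y))"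
  proof (rule sum.reindex_bij_witness[of _ "\<lambda>y. y[i := a]" "\<lambda>x. x[i := b]"])
    fix x assume x: "x \<in> ?A"
    then have len: "i < length x" using assms by (auto simp: words_def)
    have "word_weight D (x[i := b]) * pmf D a = word_weight D x * pmf D b"
      using word_weight_list_update[OF len, of D b] x by simp
    then show "pmf D a / pmf D b * (word_weight D (x[i := b]) * G (x[i := b])) = word_weight D x * G (x[i := b])"
      using assms(3) by (simp add: field_simps)
  qed (use assms in \<open>auto simp: words_def\<close>)
  also have "\<dots> = (pmf D a / pmf D b) * (\<Sum>y\<in>?B. word_weight D y * G y)"
    by (rule sum_distrib_left[symmetric])
  also have "(\<Sum>y\<in>?B. word_weight D y * G y) = (\<Sum>x\<in>words n. if x ! i = b then word_weight D x * G x else 0)"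
    by (simp add: sum.If_cases finite_words Int_def conj_commute)
  finally show ?thesis .
qed

definition pair_mean :: "'a pmf \<Rightarrow> nat \<Rightarrow> ('a list \<times> 'a list \<Rightarrow> real) \<Rightarrow> real" where
  "pair_mean D n h = (\<Sum>z\<in>words n \<times> words n. word_weight D (fst z) * word_weight D (snd z) * h z)"

lemma pair_mean_cong: "(\<And>z. z \<in> words n \<times> words n \<Longrightarrow> f z = g z) \<Longrightarrow> pair_mean D n f = pair_mean D n g"
  unfolding pair_mean_def by (intro sum.cong) auto

lemma pair_mean_add: "pair_mean D n (\<lambda>z. f z + g z) = pair_mean D n f + pair_mean D n g"
  unfolding pair_mean_def by (simp add: distrib_left sum.distrib)

lemma pair_mean_diff: "pair_mean D n (\<lambda>z. f z - g z) = pair_mean D n f - pair_mean D n g"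
  unfolding pair_mean_def by (simp add: right_diff_distrib sum_subtractf)

lemma pair_mean_cmult: "pair_mean D n (\<lambda>z. c * f z) = c * pair_mean D n f"
  unfolding pair_mean_def by (simp add: sum_distrib_left mult_ac)

lemma pair_mean_sum: "pair_mean D n (\<lambda>z. \<Sum>i\<in>I. F i z) = (\<Sum>i\<in>I. pair_mean D n (F i))"
  unfolding pair_mean_def by (simp add: sum_distrib_left sum.swap[of _ I])

lemma pair_mean_iterated: "pair_mean D n h = (\<Sum>x\<in>words n. \<Sum>y\<in>words n. word_weight D x * word_weight D y * h (x, y))"
  unfolding pair_mean_def by (simp add: sum.cartesian_product split_beta)

lemma pair_mean_mono: "(\<And>z. z \<in> words n \<times> words n \<Longrightarrow> f z \<le> g z) \<Longrightarrow> pair_mean D n f \<le> pair_mean D n g"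
  unfolding pair_mean_def by (intro sum_mono mult_left_mono) (auto simp: word_weight_nonneg)

lemma pair_mean_const: "pair_mean D n (\<lambda>z. c) = c" for D :: "'a::finite pmf"
  unfolding pair_mean_iterated by (simp add: sum_distrib_left[symmetric] sum_distrib_right[symmetric] sum_word_weight mult_ac)

lemma pair_mean_swap: "pair_mean D n (\<lambda>z. h (snd z, fst z)) = pair_mean D n h"
  unfolding pair_mean_iterated by (subst sum.swap) (simp add: mult.commute)

lemma expectation_XY_pmf:
  fixes D :: "'a::finite pmf"
  shows "measure_pmf.expectation (XY_pmf D n) g = pair_mean D n g"
proof -
  have "measure_pmf.expectation (XY_pmf D n) g = (\<Sum>z\<in>(words n :: 'a list set) \<times> (words n :: 'a list set). g z * pmf (XY_pmf D n) z)"
  proof (rule integral_measure_pmf_real)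
    show "finite ((words n :: 'a list set) \<times> (words n :: 'a list set))" by (simp add: finite_words)
    fix z assume "z \<in> set_pmf (XY_pmf D n)"
    then show "z \<in> words n \<times> words n"
      by (cases z) (auto simp: XY_pmf_def set_pmf_iff pmf_pair pmf_word_pmf words_def split: if_splits)
  qed
  also have "\<dots> = (\<Sum>z\<in>words n \<times> words n. word_weight D (fst z) * word_weight D (snd z) * g z)"
    by (intro sum.cong refl) (auto simp: XY_pmf_def pmf_pair pmf_word_pmf words_def)
  finally show ?thesis by (simp add: pair_mean_def)
qed

lemma prob_XY_pmf:
  fixes D :: "'a::finite pmf"
  shows "measure_pmf.prob (XY_pmf D n) A = pair_mean D n (indicator A)"
  by (simp flip: expectation_XY_pmf)

lemma variance_XY_pmf:
  fixes D :: "'a::finite pmf"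
  shows "measure_pmf.variance (XY_pmf D n) F = pair_mean D n (\<lambda>z. (F z - pair_mean D n F)\<^sup>2)"
  by (simp add: expectation_XY_pmf)

lemma variance_XY_pmf_moments:
  fixes D :: "'a::finite pmf"
  shows "measure_pmf.variance (XY_pmf D n) F = pair_mean D n (\<lambda>z. (F z)\<^sup>2) - (pair_mean D n F)\<^sup>2"
proof -
  have "measure_pmf.variance (XY_pmf D n) F = pair_mean D n (\<lambda>z. (F z - pair_mean D n F)\<^sup>2)"
    by (rule variance_XY_pmf)
  also have "\<dots> = pair_mean D n (\<lambda>z. (F z)\<^sup>2 - (2 * pair_mean D n F) * F z + (pair_mean D n F)\<^sup>2)"
    by (intro pair_mean_cong) (simp add: power2_diff)
  also have "\<dots> = pair_mean D n (\<lambda>z. (F z)\<^sup>2) - (pair_mean D n F)\<^sup>2"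
    by (simp add: pair_mean_add pair_mean_diff pair_mean_cmult pair_mean_const power2_eq_square)
  finally show ?thesis .
qed

lemma pair_mean_mult_sq_le:
  "(pair_mean D n (\<lambda>z. f z * g z))\<^sup>2 \<le> pair_mean D n (\<lambda>z. (f z)\<^sup>2) * pair_mean D n (\<lambda>z. (g z)\<^sup>2)"
proof -
  define w where "w z = word_weight D (fst z) * word_weight D (snd z)" for z
  define u where "u z = sqrt (w z) * f z" for z
  define v where "v z = sqrt (w z) * g z" for z
  have sqrt_w: "sqrt (w z) * sqrt (w z) = w z" for z
    by (simp add: w_def word_weight_nonneg)
  have "u z * v z = w z * (f z * g z)" "(u z)\<^sup>2 = w z * (f z)\<^sup>2" "(v z)\<^sup>2 = w z * (g z)\<^sup>2" for z
    using sqrt_w[of z] by (simp_all add: u_def v_def power2_eq_square algebra_simps)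
  moreover have "(\<Sum>z\<in>words n \<times> words n. u z * v z)\<^sup>2
      \<le> (\<Sum>z\<in>words n \<times> words n. (u z)\<^sup>2) * (\<Sum>z\<in>words n \<times> words n. (v z)\<^sup>2)"
    by (rule Cauchy_Schwarz_ineq_sum)
  ultimately show ?thesis by (simp add: pair_mean_def w_def)
qed

lemma covariance_sq_le_variance:
  fixes D :: "'a::finite pmf"
  assumes "pair_mean D n W = 0"
  shows "(pair_mean D n (\<lambda>z. W z * g z))\<^sup>2
           \<le> pair_mean D n (\<lambda>z. (W z)\<^sup>2) * measure_pmf.variance (XY_pmf D n) g"
proof -
  define m where "m = pair_mean D n g"
  have "pair_mean D n (\<lambda>z. W z * (g z - m)) = pair_mean D n (\<lambda>z. W z * g z) - m * pair_mean D n W"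
    by (simp add: right_diff_distrib pair_mean_diff flip: pair_mean_cmult) (simp add: mult.commute)
  then show ?thesis
    using pair_mean_mult_sq_le[of D n W "\<lambda>z. g z - m"] assms by (simp add: variance_XY_pmf m_def)
qed

lemma variance_ge_covariance:
  fixes D :: "'a::finite pmf"
  assumes "pair_mean D n W = 0" "pair_mean D n (\<lambda>z. (W z)\<^sup>2) = E" "E > 0"
    and "0 \<le> L" "L \<le> pair_mean D n (\<lambda>z. W z * g z)"
  shows "L\<^sup>2 / E \<le> measure_pmf.variance (XY_pmf D n) g"
proof -
  have "L\<^sup>2 \<le> (pair_mean D n (\<lambda>z. W z * g z))\<^sup>2"
    using assms(4,5) by (intro power_mono) auto
  also have "\<dots> \<le> E * measure_pmf.variance (XY_pmf D n) g"
    using covariance_sq_le_variance[OF assms(1)] assms(2) by simp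
  finally show ?thesis
    using assms(3) by (simp add: divide_le_eq mult.commute)
qed

lemma pair_mean_mult_ge:
  fixes D :: "'a::finite pmf" and N f :: "'a list \<times> 'a list \<Rightarrow> real"
  assumes "\<Delta> \<ge> 0"
    and N: "\<And>z. z \<in> words n \<times> words n \<Longrightarrow> 0 \<le> N z \<and> N z \<le> B"
    and f: "\<And>z. \<bar>f z\<bar> \<le> M"
  shows "\<Delta> * pair_mean D n N - (\<Delta> + M) * B * (1 - pair_mean D n (\<lambda>z. if \<Delta> \<le> f z then 1 else 0))
           \<le> pair_mean D n (\<lambda>z. N z * f z)"
proof -
  have "pair_mean D n (\<lambda>z. \<Delta> * N z - (\<Delta> + M) * B * (1 - (if \<Delta> \<le> f z then 1 else 0)))
          \<le> pair_mean D n (\<lambda>z. N z * f z)"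
  proof (rule pair_mean_mono)
    fix z :: "'a list \<times> 'a list" assume z: "z \<in> words n \<times> words n"
    show "\<Delta> * N z - (\<Delta> + M) * B * (1 - (if \<Delta> \<le> f z then 1 else 0)) \<le> N z * f z"
    proof (cases "\<Delta> \<le> f z")
      case True
      then show ?thesis using N[OF z] mult_left_mono[OF True, of "N z"] by (simp add: mult.commute)
    next
      case False
      have "- M * N z \<le> N z * f z"
        using N[OF z] f[of z] mult_left_mono[of "- M" "f z" "N z"] by (simp add: mult.commute)
      moreover have "(\<Delta> + M) * N z \<le> (\<Delta> + M) * B"
        using N[OF z] f[of z] assms(1) by (intro mult_left_mono) auto
      ultimately show ?thesis using False by (simp add: algebra_simps)
    qed
  qed
  then show ?thesis by (simp add: pair_mean_diff pair_mean_cmult pair_mean_const)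
qed

lemma pair_mean_replace_fst:
  fixes D :: "'a::finite pmf"
  assumes "i < n" "a \<noteq> b" "pmf D b > 0"
  shows "pair_mean D n (\<lambda>z. if fst z ! i = a then g ((fst z)[i := b], snd z) else 0)
       = (pmf D a / pmf D b) * pair_mean D n (\<lambda>z. if fst z ! i = b then g z else 0)"
proof -
  define G where "G x = (\<Sum>y\<in>words n. word_weight D y * g (x, y))" for x
  have "pair_mean D n (\<lambda>z. if fst z ! i = a then g ((fst z)[i := b], snd z) else 0)
      = (\<Sum>x\<in>words n. if x ! i = a then word_weight D x * G (x[i := b]) else 0)"
    unfolding pair_mean_iterated G_def by (intro sum.cong refl) (auto simp: sum_distrib_left mult_ac)
  also have "\<dots> = (pmf D a / pmf D b) * (\<Sum>x\<in>words n. if x ! i = b then word_weight D x * G x else 0)"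
    by (rule sum_words_replace_letter[OF assms])
  also have "(\<Sum>x\<in>words n. if x ! i = b then word_weight D x * G x else 0)
      = pair_mean D n (\<lambda>z. if fst z ! i = b then g z else 0)"
    unfolding pair_mean_iterated G_def by (intro sum.cong refl) (auto simp: sum_distrib_left mult_ac)
  finally show ?thesis .
qed

lemma pair_mean_nth_fst:
  fixes D :: "'a::finite pmf"
  assumes "i < n"
  shows "pair_mean D n (\<lambda>z. if fst z ! i = c then 1 else 0) = pmf D c"
proof -
  have "pair_mean D n (\<lambda>z. if fst z ! i = c then 1 else 0) =
     (\<Sum>x\<in>words n. if x ! i = c then word_weight D x else 0) * (\<Sum>y\<in>words n. word_weight D y)"
    unfolding pair_mean_iterated sum_product by (intro sum.cong refl) auto
  then show ?thesis using sum_word_weight_nth[OF assms] by (simp add: sum_word_weight)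
qed

section \<open>Letter positions and the exchange identity\<close>

definition positions :: "nat \<Rightarrow> (nat + nat) set" where
  "positions n = Inl ` {..<n} \<union> Inr ` {..<n}"

definition letter_at :: "'a list \<times> 'a list \<Rightarrow> nat + nat \<Rightarrow> 'a" where
  "letter_at z k = (case k of Inl i \<Rightarrow> fst z ! i | Inr j \<Rightarrow> snd z ! j)"

lemma finite_positions: "finite (positions n)"
  by (simp add: positions_def)

lemma card_positions: "card (positions n) = 2 * n"
  unfolding positions_def by (subst card_Un_disjoint) (auto simp: card_image)

lemma replace_at_Inl [simp]: "replace_at b x y (Inl i) = (x[i := b], y)"
  by (simp add: replace_at_def)

lemma replace_at_Inr [simp]: "replace_at b x y (Inr j) = (x, y[j := b])"
  by (simp add: replace_at_def)

lemma finite_occurrences: "finite (occurrences a x y)"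
  unfolding occurrences_def by auto

lemma occurrences_eq_positions:
  assumes "z \<in> words n \<times> words n"
  shows "occurrences a (fst z) (snd z) = {k \<in> positions n. letter_at z k = a}"
  using assms by (auto simp: occurrences_def positions_def letter_at_def words_def)

lemma sum_occurrences:
  assumes "z \<in> words n \<times> words n"
  shows "(\<Sum>k\<in>occurrences a (fst z) (snd z). f k) = (\<Sum>k\<in>positions n. if letter_at z k = a then f k else 0)"
  by (simp add: occurrences_eq_positions[OF assms] sum.inter_filter finite_positions)

lemma card_occurrences_le:
  assumes "z \<in> words n \<times> words n"
  shows "real (card (occurrences a (fst z) (snd z))) \<le> 2 * real n"
proof -
  have "card (occurrences a (fst z) (snd z)) \<le> card (positions n)"
    unfolding occurrences_eq_positions[OF assms] by (intro card_mono finite_positions) auto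
  then show ?thesis by (simp add: card_positions)
qed

lemma pair_mean_replace_at:
  fixes D :: "'a::finite pmf"
  assumes "k \<in> positions n" "a \<noteq> b" "pmf D b > 0"
  shows "pair_mean D n (\<lambda>z. if letter_at z k = a then g (replace_at b (fst z) (snd z) k) else 0)
       = (pmf D a / pmf D b) * pair_mean D n (\<lambda>z. if letter_at z k = b then g z else 0)"
proof (cases k)
  case (Inl i)
  then show ?thesis
    using assms pair_mean_replace_fst[of i n a b D g]
    by (auto simp: positions_def letter_at_def cong: if_cong)
next
  case (Inr j)
  let ?g = "\<lambda>z. g (snd z, fst z)"
  have "pair_mean D n (\<lambda>z. if fst z ! j = a then ?g ((fst z)[j := b], snd z) else 0)
      = (pmf D a / pmf D b) * pair_mean D n (\<lambda>z. if fst z ! j = b then ?g z else 0)"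
    using assms Inr by (intro pair_mean_replace_fst) (auto simp: positions_def)
  then show ?thesis
    using pair_mean_swap[of D n "\<lambda>z. if fst z ! j = a then ?g ((fst z)[j := b], snd z) else 0"]
      pair_mean_swap[of D n "\<lambda>z. if fst z ! j = b then ?g z else 0"]
    by (simp add: Inr letter_at_def cong: if_cong)
qed

lemma pair_mean_letter_at:
  fixes D :: "'a::finite pmf"
  assumes "k \<in> positions n"
  shows "pair_mean D n (\<lambda>z. if letter_at z k = c then 1 else 0) = pmf D c"
proof (cases k)
  case (Inl i)
  then show ?thesis using assms pair_mean_nth_fst[of i n D c] by (auto simp: positions_def letter_at_def)
next
  case (Inr j)
  then show ?thesis
    using assms pair_mean_nth_fst[of j n D c] pair_mean_swap[of D n "\<lambda>z. if fst z ! j = c then 1 else 0"]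
    by (auto simp: positions_def letter_at_def)
qed

lemma pair_mean_card_occurrences:
  fixes D :: "'a::finite pmf"
  shows "pair_mean D n (\<lambda>z. real (card (occurrences c (fst z) (snd z)))) = 2 * real n * pmf D c"
proof -
  have "pair_mean D n (\<lambda>z. real (card (occurrences c (fst z) (snd z))))
      = pair_mean D n (\<lambda>z. \<Sum>k\<in>positions n. if letter_at z k = c then 1 else 0)"
  proof (rule pair_mean_cong)
    fix z :: "'a list \<times> 'a list" assume "z \<in> words n \<times> words n"
    then show "real (card (occurrences c (fst z) (snd z))) = (\<Sum>k\<in>positions n. if letter_at z k = c then 1 else 0)"
      using sum_occurrences[where f="\<lambda>_. 1::real"] by simp
  qed
  also have "\<dots> = (\<Sum>k\<in>positions n. pmf D c)"
    by (simp add: pair_mean_sum pair_mean_letter_at)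
  finally show ?thesis by (simp add: card_positions)
qed

definition imbalance :: "'a pmf \<Rightarrow> 'a \<Rightarrow> 'a \<Rightarrow> 'a list \<Rightarrow> 'a list \<Rightarrow> real" where
  "imbalance D a b x y = pmf D a / pmf D b * card (occurrences b x y) - card (occurrences a x y)"

lemma pair_mean_replace_occurrences:
  fixes D :: "'a::finite pmf"
  assumes "a \<noteq> b" and "pmf D b > 0"
  shows "pair_mean D n (\<lambda>z. \<Sum>k\<in>occurrences a (fst z) (snd z). g (replace_at b (fst z) (snd z) k) - g z)
       = pair_mean D n (\<lambda>z. imbalance D a b (fst z) (snd z) * g z)"
proof -
  define r where "r = pmf D a / pmf D b"
  let ?A = "\<lambda>k z. if letter_at z k = a then g (replace_at b (fst z) (snd z) k) else 0"
  let ?B = "\<lambda>c k z. if letter_at z k = c then g z else 0"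
  have sum_B: "(\<Sum>k\<in>positions n. ?B c k z) = card (occurrences c (fst z) (snd z)) * g z"
    if "z \<in> words n \<times> words n" for c z
    using sum_occurrences[OF that, where f="\<lambda>_. g z"] by simp
  have "pair_mean D n (\<lambda>z. \<Sum>k\<in>occurrences a (fst z) (snd z). g (replace_at b (fst z) (snd z) k) - g z)
      = pair_mean D n (\<lambda>z. (\<Sum>k\<in>positions n. ?A k z) - (\<Sum>k\<in>positions n. ?B a k z))"
  proof (rule pair_mean_cong)
    fix z :: "'a list \<times> 'a list" assume "z \<in> words n \<times> words n"
    then have "(\<Sum>k\<in>occurrences a (fst z) (snd z). g (replace_at b (fst z) (snd z) k) - g z)
        = (\<Sum>k\<in>positions n. if letter_at z k = a then g (replace_at b (fst z) (snd z) k) - g z else 0)"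
      by (rule sum_occurrences)
    also have "\<dots> = (\<Sum>k\<in>positions n. ?A k z) - (\<Sum>k\<in>positions n. ?B a k z)"
      unfolding sum_subtractf[symmetric] by (intro sum.cong) auto
    finally show "(\<Sum>k\<in>occurrences a (fst z) (snd z). g (replace_at b (fst z) (snd z) k) - g z)
        = (\<Sum>k\<in>positions n. ?A k z) - (\<Sum>k\<in>positions n. ?B a k z)" .
  qed
  also have "\<dots> = (\<Sum>k\<in>positions n. pair_mean D n (?A k)) - (\<Sum>k\<in>positions n. pair_mean D n (?B a k))"
    by (simp add: pair_mean_diff pair_mean_sum)
  also have "(\<Sum>k\<in>positions n. pair_mean D n (?A k)) = (\<Sum>k\<in>positions n. r * pair_mean D n (?B b k))"
    unfolding r_def by (intro sum.cong refl pair_mean_replace_at assms)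
  also have "\<dots> - (\<Sum>k\<in>positions n. pair_mean D n (?B a k))
      = pair_mean D n (\<lambda>z. r * (\<Sum>k\<in>positions n. ?B b k z) - (\<Sum>k\<in>positions n. ?B a k z))"
    by (simp add: pair_mean_diff pair_mean_sum pair_mean_cmult sum_distrib_left)
  also have "\<dots> = pair_mean D n (\<lambda>z. imbalance D a b (fst z) (snd z) * g z)"
    by (intro pair_mean_cong) (simp add: sum_B imbalance_def r_def algebra_simps)
  finally show ?thesis .
qed

lemma occurrences_replace_at_new:
  assumes "k \<in> occurrences a x y" "a \<noteq> b"
  shows "occurrences b (fst (replace_at b x y k)) (snd (replace_at b x y k)) = insert k (occurrences b x y)"
    and "k \<notin> occurrences b x y"
  using assms by (cases k; auto simp: occurrences_def replace_at_def nth_list_update)+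

lemma occurrences_replace_at_old:
  assumes "k \<in> occurrences a x y" "a \<noteq> b"
  shows "occurrences a (fst (replace_at b x y k)) (snd (replace_at b x y k)) = occurrences a x y - {k}"
  using assms by (cases k; auto simp: occurrences_def replace_at_def nth_list_update)

lemma imbalance_replace_at:
  assumes "k \<in> occurrences a x y" "a \<noteq> b"
  shows "imbalance D a b (fst (replace_at b x y k)) (snd (replace_at b x y k))
           = imbalance D a b x y + (pmf D a / pmf D b + 1)"
proof -
  have "card (occurrences a x y) \<ge> 1"
    using assms(1) finite_occurrences by (metis One_nat_def Suc_leI card_gt_0_iff empty_iff)
  then show ?thesis
    unfolding imbalance_def occurrences_replace_at_new(1)[OF assms] occurrences_replace_at_old[OF assms]
    using assms finite_occurrences occurrences_replace_at_new(2)[OF assms]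
    by (simp add: card_insert_disjoint[OF finite_occurrences] algebra_simps)
qed

lemma pair_mean_imbalance:
  fixes D :: "'a::finite pmf"
  assumes "a \<noteq> b" "pmf D b > 0"
  shows "pair_mean D n (\<lambda>z. imbalance D a b (fst z) (snd z)) = 0"
  using pair_mean_replace_occurrences[OF assms, of n "\<lambda>_. 1"] by (simp add: pair_mean_const)

lemma pair_mean_imbalance_sq:
  fixes D :: "'a::finite pmf"
  assumes "a \<noteq> b" "pmf D b > 0"
  shows "pair_mean D n (\<lambda>z. (imbalance D a b (fst z) (snd z))\<^sup>2) = 2 * n * pmf D a * (pmf D a / pmf D b + 1)"
proof -
  let ?W = "\<lambda>z. imbalance D a b (fst z) (snd z)"
  have "pair_mean D n (\<lambda>z. (?W z)\<^sup>2) = pair_mean D n (\<lambda>z. ?W z * ?W z)"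
    by (simp add: power2_eq_square)
  also have "\<dots> = pair_mean D n (\<lambda>z. \<Sum>k\<in>occurrences a (fst z) (snd z). ?W (replace_at b (fst z) (snd z) k) - ?W z)"
    by (rule pair_mean_replace_occurrences[OF assms, symmetric])
  also have "\<dots> = pair_mean D n (\<lambda>z. (pmf D a / pmf D b + 1) * card (occurrences a (fst z) (snd z)))"
    by (intro pair_mean_cong) (simp add: imbalance_replace_at[OF _ assms(1)] mult.commute)
  also have "\<dots> = 2 * n * pmf D a * (pmf D a / pmf D b + 1)"
    by (simp add: pair_mean_cmult pair_mean_card_occurrences)
  finally show ?thesis by simp
qed

section \<open>Bounded differences of the optimal score\<close>

lemma alignments_sorted:
  assumes "\<pi> \<in> alignments m m'"
  shows "sorted_wrt (\<lambda>p q. fst p < fst q) \<pi>" "sorted_wrt (\<lambda>p q. snd p < snd q) \<pi>"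
  using assms unfolding alignments_def
  by (auto elim!: sorted_wrt_mono_rel[rotated] simp: split_beta)

lemma finite_alignments: "finite (alignments m m')"
proof -
  have "alignments m m' \<subseteq> {\<pi>. set \<pi> \<subseteq> {..<m} \<times> {..<m'} \<and> length \<pi> \<le> m}"
  proof
    fix \<pi> assume \<pi>: "\<pi> \<in> alignments m m'"
    have "sorted_wrt (<) (map fst \<pi>)" using alignments_sorted(1)[OF \<pi>] by (simp add: sorted_wrt_map)
    then have d: "distinct (map fst \<pi>)" by (simp add: strict_sorted_iff)
    have s: "set \<pi> \<subseteq> {..<m} \<times> {..<m'}" using \<pi> by (auto simp: alignments_def)
    then have "set (map fst \<pi>) \<subseteq> {..<m}" by auto
    then have "card (set (map fst \<pi>)) \<le> m" using card_mono[of "{..<m}"] by fastforce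
    then have "length \<pi> \<le> m" using distinct_card[OF d] by simp
    then show "\<pi> \<in> {\<pi>. set \<pi> \<subseteq> {..<m} \<times> {..<m'} \<and> length \<pi> \<le> m}" using s by simp
  qed
  then show ?thesis by (rule finite_subset) (intro finite_lists_length_le finite_cartesian_product; simp)
qed

lemma Nil_in_alignments: "[] \<in> alignments m m'"
  by (simp add: alignments_def)

lemma length_filter_key_le_1:
  assumes "sorted_wrt (\<lambda>p q. f p < (f q :: nat)) \<pi>"
  shows "length (filter (\<lambda>p. f p = i) \<pi>) \<le> 1"
  using assms
proof (induction \<pi>)
  case (Cons p \<pi>)
  show ?case
  proof (cases "f p = i")
    case True
    then have "filter (\<lambda>p. f p = i) \<pi> = []" using Cons.prems by (auto simp: filter_empty_conv)
    then show ?thesis using True by simp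
  next
    case False
    then show ?thesis using Cons by simp
  qed
qed simp

lemma abs_sum_list_le_count:
  fixes h :: "'b \<Rightarrow> real"
  assumes "\<And>p. p \<in> set \<pi> \<Longrightarrow> \<bar>h p\<bar> \<le> (if P p then c else 0)"
  shows "\<bar>sum_list (map h \<pi>)\<bar> \<le> c * length (filter P \<pi>)"
  using assms
proof (induction \<pi>)
  case (Cons p \<pi>)
  have "\<bar>sum_list (map h (p # \<pi>))\<bar> \<le> \<bar>h p\<bar> + \<bar>sum_list (map h \<pi>)\<bar>" by simp
  also have "\<dots> \<le> (if P p then c else 0) + c * length (filter P \<pi>)"
    using Cons by (intro add_mono) auto
  finally show ?case by (cases "P p") (simp_all add: distrib_left)
qed simp

text \<open>In a list strictly sorted by a key, at most one entry carries a given key.\<close>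

lemma abs_sum_list_le_single_key:
  fixes h :: "'b \<Rightarrow> real"
  assumes "sorted_wrt (\<lambda>p q. f p < (f q :: nat)) \<pi>" "c \<ge> 0"
    and "\<And>p. p \<in> set \<pi> \<Longrightarrow> \<bar>h p\<bar> \<le> (if f p = i then c else 0)"
  shows "\<bar>sum_list (map h \<pi>)\<bar> \<le> c"
proof -
  have "\<bar>sum_list (map h \<pi>)\<bar> \<le> c * length (filter (\<lambda>p. f p = i) \<pi>)"
    using assms(3) by (rule abs_sum_list_le_count)
  also have "\<dots> \<le> c * 1"
    using length_filter_key_le_1[OF assms(1)] assms(2) by (intro mult_left_mono) auto
  finally show ?thesis by simp
qed

lemma abs_sum_le_single:
  fixes h :: "'b \<Rightarrow> real"
  assumes "finite T" "c \<ge> 0" "\<And>t. t \<in> T \<Longrightarrow> \<bar>h t\<bar> \<le> (if t = i then c else 0)"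
  shows "\<bar>sum h T\<bar> \<le> c"
proof -
  have "\<bar>sum h T\<bar> \<le> (\<Sum>t\<in>T. if t = i then c else 0)"
    using assms by (intro order_trans[OF sum_abs sum_mono]) auto
  also have "\<dots> \<le> c" using assms by simp
  finally show ?thesis .
qed

text \<open>A letter enters an alignment score through at most one matched pair and at most one gap term.\<close>

lemma align_score_update_fst:
  assumes K: "\<And>u v. \<bar>S u v\<bar> \<le> K" and \<pi>: "\<pi> \<in> alignments (length x) (length y)"
  shows "\<bar>align_score S (x[i := c]) y \<pi> - align_score S x y \<pi>\<bar> \<le> 4 * K"
proof -
  have K0: "K \<ge> 0" using K[of None None] by linarith
  have K2: "\<bar>S u v - S u' v'\<bar> \<le> 2 * K" for u v u' v' using K[of u v] K[of u' v'] by linarith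
  have "\<bar>(\<Sum>(i', j)\<leftarrow>\<pi>. S (Some (x[i := c] ! i')) (Some (y ! j))) - (\<Sum>(i', j)\<leftarrow>\<pi>. S (Some (x ! i')) (Some (y ! j)))\<bar>
      \<le> 2 * K"
    unfolding case_prod_unfold sum_list_subtractf[symmetric]
    using K0 by (intro abs_sum_list_le_single_key[OF alignments_sorted(1)[OF \<pi>], where i=i])
      (simp_all add: K2 split: if_split)
  moreover have "\<bar>(\<Sum>i'\<in>{..<length x} - fst ` set \<pi>. S (Some (x[i := c] ! i')) None)
      - (\<Sum>i'\<in>{..<length x} - fst ` set \<pi>. S (Some (x ! i')) None)\<bar> \<le> 2 * K"
    unfolding sum_subtractf[symmetric]
    using K0 by (intro abs_sum_le_single[where i=i])
      (simp_all add: K2 split: if_split)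
  ultimately show ?thesis
    unfolding align_score_def by (simp add: abs_le_iff)
qed

lemma align_score_update_snd:
  assumes K: "\<And>u v. \<bar>S u v\<bar> \<le> K" and \<pi>: "\<pi> \<in> alignments (length x) (length y)"
  shows "\<bar>align_score S x (y[j := c]) \<pi> - align_score S x y \<pi>\<bar> \<le> 4 * K"
proof -
  have K0: "K \<ge> 0" using K[of None None] by linarith
  have K2: "\<bar>S u v - S u' v'\<bar> \<le> 2 * K" for u v u' v' using K[of u v] K[of u' v'] by linarith
  have "\<bar>(\<Sum>(i, j')\<leftarrow>\<pi>. S (Some (x ! i)) (Some (y[j := c] ! j'))) - (\<Sum>(i, j')\<leftarrow>\<pi>. S (Some (x ! i)) (Some (y ! j')))\<bar>
      \<le> 2 * K"
    unfolding case_prod_unfold sum_list_subtractf[symmetric]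
    using K0 by (intro abs_sum_list_le_single_key[OF alignments_sorted(2)[OF \<pi>], where i=j])
      (simp_all add: K2 split: if_split)
  moreover have "\<bar>(\<Sum>j'\<in>{..<length y} - snd ` set \<pi>. S None (Some (y[j := c] ! j')))
      - (\<Sum>j'\<in>{..<length y} - snd ` set \<pi>. S None (Some (y ! j')))\<bar> \<le> 2 * K"
    unfolding sum_subtractf[symmetric]
    using K0 by (intro abs_sum_le_single[where i=j])
      (simp_all add: K2 split: if_split)
  ultimately show ?thesis
    unfolding align_score_def by (simp add: abs_le_iff)
qed

lemma abs_Max_image_diff_le:
  fixes F G :: "'b \<Rightarrow> real"
  assumes "finite A" "A \<noteq> {}" "\<And>p. p \<in> A \<Longrightarrow> \<bar>F p - G p\<bar> \<le> M"
  shows "\<bar>Max (F ` A) - Max (G ` A)\<bar> \<le> M"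
proof -
  have "Max (F' ` A) \<le> Max (G' ` A) + M" if "\<And>p. p \<in> A \<Longrightarrow> F' p \<le> G' p + M" for F' G' :: "'b \<Rightarrow> real"
  proof (subst Max_le_iff)
    show "\<forall>t\<in>F' ` A. t \<le> Max (G' ` A) + M"
    proof
      fix t assume "t \<in> F' ` A"
      then obtain p where p: "p \<in> A" "t = F' p" by blast
      have "G' p \<le> Max (G' ` A)" using p assms(1) by (intro Max_ge) auto
      then show "t \<le> Max (G' ` A) + M" using that[of p] p by linarith
    qed
  qed (use assms in auto)
  from this[of F G] this[of G F] show ?thesis
    using assms(3) by (force simp: abs_le_iff)
qed

lemma opt_score_update_fst:
  assumes "\<And>u v. \<bar>S u v\<bar> \<le> K"
  shows "\<bar>opt_score S (x[i := c]) y - opt_score S x y\<bar> \<le> 4 * K"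
  unfolding opt_score_def length_list_update
  using assms finite_alignments Nil_in_alignments[of "length x" "length y"]
  by (intro abs_Max_image_diff_le align_score_update_fst) auto

lemma opt_score_update_snd:
  assumes "\<And>u v. \<bar>S u v\<bar> \<le> K"
  shows "\<bar>opt_score S x (y[j := c]) - opt_score S x y\<bar> \<le> 4 * K"
  unfolding opt_score_def length_list_update
  using assms finite_alignments Nil_in_alignments[of "length x" "length y"]
  by (intro abs_Max_image_diff_le align_score_update_snd) auto

lemma abs_opt_score_replace_at_le:
  assumes "\<And>u v. \<bar>S u v\<bar> \<le> K"
  shows "\<bar>opt_score S (fst (replace_at b x y k)) (snd (replace_at b x y k)) - opt_score S x y\<bar> \<le> 4 * K"
  using assms by (cases k) (simp_all add: opt_score_update_fst opt_score_update_snd)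

lemma card_mult_cond_increment:
  "real (card (occurrences a x y)) * cond_increment S a b x y =
     (\<Sum>k\<in>occurrences a x y. opt_score S (fst (replace_at b x y k)) (snd (replace_at b x y k)) - opt_score S x y)"
proof (cases "occurrences a x y = {}")
  case True
  then show ?thesis by (simp add: cond_increment_def perturb_pmf_def)
next
  case False
  have "cond_increment S a b x y =
     (\<Sum>k\<in>occurrences a x y. opt_score S (fst (replace_at b x y k)) (snd (replace_at b x y k)) - opt_score S x y)
      / real (card (occurrences a x y))"
    unfolding cond_increment_def perturb_pmf_def using False
    by (simp add: integral_pmf_of_set[OF False finite_occurrences] case_prod_unfold)
  moreover have "card (occurrences a x y) > 0" using False finite_occurrences by (simp add: card_gt_0_iff)
  ultimately show ?thesis by simp
qed

lemma abs_cond_increment_le: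
  assumes K: "\<And>u v. \<bar>S u v\<bar> \<le> K"
  shows "\<bar>cond_increment S a b x y\<bar> \<le> 4 * K"
proof (cases "occurrences a x y = {}")
  case True
  then show ?thesis using K[of None None] by (simp add: cond_increment_def perturb_pmf_def)
next
  case False
  let ?N = "real (card (occurrences a x y))"
  have "?N * \<bar>cond_increment S a b x y\<bar>
      = \<bar>\<Sum>k\<in>occurrences a x y. opt_score S (fst (replace_at b x y k)) (snd (replace_at b x y k)) - opt_score S x y\<bar>"
    by (simp flip: card_mult_cond_increment add: abs_mult)
  also have "\<dots> \<le> (\<Sum>k\<in>occurrences a x y. 4 * K)"
    by (rule order_trans[OF sum_abs sum_mono]) (rule abs_opt_score_replace_at_le[OF K])
  also have "\<dots> = ?N * (4 * K)" by simp
  finally have "?N * \<bar>cond_increment S a b x y\<bar> \<le> ?N * (4 * K)" .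
  moreover have "0 < ?N"
    using False finite_occurrences by (simp add: card_gt_0_iff)
  ultimately show ?thesis by simp
qed

section \<open>The Efron--Stein upper bound\<close>

lemma weighted_variance_eq:
  fixes p v :: "'b \<Rightarrow> real"
  assumes "finite I" "sum p I = 1"
  shows "(\<Sum>c\<in>I. p c * (v c)\<^sup>2) - (\<Sum>c\<in>I. p c * v c)\<^sup>2 = (\<Sum>c\<in>I. p c * (v c - (\<Sum>d\<in>I. p d * v d))\<^sup>2)"
proof -
  define m where "m = (\<Sum>d\<in>I. p d * v d)"
  have "(\<Sum>c\<in>I. p c * (v c - m)\<^sup>2) = (\<Sum>c\<in>I. p c * (v c)\<^sup>2 - 2 * m * (p c * v c) + m\<^sup>2 * p c)"
    by (intro sum.cong refl) (simp add: power2_diff algebra_simps)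
  also have "\<dots> = (\<Sum>c\<in>I. p c * (v c)\<^sup>2) - 2 * m * m + m\<^sup>2 * 1"
    using assms by (simp add: sum.distrib sum_subtractf sum_distrib_left[symmetric] m_def)
  finally show ?thesis unfolding m_def by (simp add: power2_eq_square)
qed

lemma weighted_variance_le:
  fixes p v :: "'b \<Rightarrow> real"
  assumes "finite I" "sum p I = 1" "\<And>c. c \<in> I \<Longrightarrow> p c \<ge> 0"
    and "\<And>c d. c \<in> I \<Longrightarrow> d \<in> I \<Longrightarrow> \<bar>v c - v d\<bar> \<le> M"
  shows "(\<Sum>c\<in>I. p c * (v c)\<^sup>2) - (\<Sum>c\<in>I. p c * v c)\<^sup>2 \<le> M\<^sup>2"
proof -
  define m where "m = (\<Sum>d\<in>I. p d * v d)"
  have b: "\<bar>v c - m\<bar> \<le> M" if c: "c \<in> I" for c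
  proof -
    have "v c - m = (\<Sum>d\<in>I. p d * (v c - v d))"
      using assms(2) by (simp add: m_def algebra_simps sum_subtractf sum_distrib_right[symmetric])
    then have "\<bar>v c - m\<bar> \<le> (\<Sum>d\<in>I. \<bar>p d * (v c - v d)\<bar>)" using sum_abs by simp
    also have "\<dots> \<le> (\<Sum>d\<in>I. p d * M)"
      using assms c by (intro sum_mono) (simp add: abs_mult mult_left_mono)
    also have "\<dots> = M" using assms(2) by (simp add: sum_distrib_right[symmetric])
    finally show ?thesis .
  qed
  have "(\<Sum>c\<in>I. p c * (v c - m)\<^sup>2) \<le> (\<Sum>c\<in>I. p c * M\<^sup>2)"
  proof (intro sum_mono mult_left_mono)
    fix c assume c: "c \<in> I"
    show "(v c - m)\<^sup>2 \<le> M\<^sup>2" using power_mono[OF b[OF c] abs_ge_zero, of 2] by simp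
  qed (use assms in auto)
  also have "\<dots> = M\<^sup>2" using assms(2) by (simp add: sum_distrib_right[symmetric])
  finally show ?thesis using weighted_variance_eq[OF assms(1,2), of v] unfolding m_def by simp
qed

lemma abs_sum_word_weight_diff_le:
  fixes D :: "'a::finite pmf"
  assumes "\<And>z. z \<in> words n \<Longrightarrow> \<bar>f z - g z\<bar> \<le> M"
  shows "\<bar>(\<Sum>z\<in>words n. word_weight D z * f z) - (\<Sum>z\<in>words n. word_weight D z * g z)\<bar> \<le> (M :: real)"
proof -
  have "\<bar>(\<Sum>z\<in>words n. word_weight D z * f z) - (\<Sum>z\<in>words n. word_weight D z * g z)\<bar>
      \<le> (\<Sum>z\<in>words n. \<bar>word_weight D z * (f z - g z)\<bar>)"
    unfolding sum_subtractf[symmetric] right_diff_distrib[symmetric] by (rule sum_abs)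
  also have "\<dots> \<le> (\<Sum>z\<in>words n. word_weight D z * M)"
    using assms by (intro sum_mono) (simp add: abs_mult word_weight_nonneg mult_left_mono)
  also have "\<dots> = M" by (simp add: sum_distrib_right[symmetric] sum_word_weight)
  finally show ?thesis .
qed

text \<open>Efron--Stein for i.i.d.\ words, by induction on the length: condition on the first letter.\<close>

lemma word_variance_le:
  fixes D :: "'a::finite pmf" and h :: "'a list \<Rightarrow> real"
  assumes "\<And>z k c. z \<in> words n \<Longrightarrow> k < n \<Longrightarrow> \<bar>h (z[k := c]) - h z\<bar> \<le> M"
  shows "(\<Sum>z\<in>words n. word_weight D z * (h z)\<^sup>2) - (\<Sum>z\<in>words n. word_weight D z * h z)\<^sup>2 \<le> real n * M\<^sup>2"
  using assms
proof (induction n arbitrary: h)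
  case 0
  have "words 0 = {[] :: 'a list}" by (auto simp: words_def)
  then show ?case by simp
next
  case (Suc n)
  define m where "m c = (\<Sum>z\<in>words n. word_weight D z * h (c # z))" for c
  define q where "q c = (\<Sum>z\<in>words n. word_weight D z * (h (c # z))\<^sup>2)" for c
  have "q c - (m c)\<^sup>2 \<le> real n * M\<^sup>2" for c
    unfolding q_def m_def
  proof (rule Suc.IH)
    fix z :: "'a list" and k d assume "z \<in> words n" "k < n"
    then show "\<bar>h (c # z[k := d]) - h (c # z)\<bar> \<le> M"
      using Suc.prems[of "c # z" "Suc k" d] by (simp add: words_def)
  qed
  then have "(\<Sum>c\<in>UNIV. pmf D c * (q c - (m c)\<^sup>2)) \<le> (\<Sum>c\<in>UNIV. pmf D c * (real n * M\<^sup>2))"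
    by (intro sum_mono mult_left_mono) auto
  also have "\<dots> = real n * M\<^sup>2"
    by (simp add: sum_distrib_right[symmetric] sum_pmf_UNIV)
  finally have within: "(\<Sum>c\<in>UNIV. pmf D c * (q c - (m c)\<^sup>2)) \<le> real n * M\<^sup>2" .
  have between: "(\<Sum>c\<in>UNIV. pmf D c * (m c)\<^sup>2) - (\<Sum>c\<in>UNIV. pmf D c * m c)\<^sup>2 \<le> M\<^sup>2"
  proof (rule weighted_variance_le)
    show "\<bar>m c - m d\<bar> \<le> M" for c d
      unfolding m_def
    proof (rule abs_sum_word_weight_diff_le)
      fix z :: "'a list" assume "z \<in> words n"
      then show "\<bar>h (c # z) - h (d # z)\<bar> \<le> M"
        using Suc.prems[of "d # z" 0 c] by (simp add: words_def)
    qed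
  qed (auto simp: sum_pmf_UNIV)
  have "(\<Sum>z\<in>words (Suc n). word_weight D z * (h z)\<^sup>2) = (\<Sum>c\<in>UNIV. pmf D c * q c)"
    "(\<Sum>z\<in>words (Suc n). word_weight D z * h z) = (\<Sum>c\<in>UNIV. pmf D c * m c)"
    unfolding sum_words_Suc q_def m_def by (simp_all add: sum_distrib_left mult_ac)
  with within between show ?case
    by (simp add: sum_subtractf algebra_simps)
qed

lemma pair_mean_append:
  fixes D :: "'a::finite pmf"
  shows "pair_mean D n g = (\<Sum>z\<in>words (n + n). word_weight D z * g (take n z, drop n z))"
proof -
  have inj: "inj_on (\<lambda>(x, y). x @ y) (words n \<times> (words n :: 'a list set))"
    by (auto simp: inj_on_def words_def)
  have img: "(\<lambda>(x, y). x @ y) ` (words n \<times> words n) = (words (n + n) :: 'a list set)"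
  proof
    show "words (n + n) \<subseteq> (\<lambda>(x, y). x @ y) ` (words n \<times> (words n :: 'a list set))"
    proof
      fix z :: "'a list" assume "z \<in> words (n + n)"
      then have "(take n z, drop n z) \<in> words n \<times> words n" "z = (\<lambda>(x, y). x @ y) (take n z, drop n z)"
        by (auto simp: words_def)
      then show "z \<in> (\<lambda>(x, y). x @ y) ` (words n \<times> words n)" by blast
    qed
  qed (auto simp: words_def)
  have "(\<Sum>z\<in>words (n + n). word_weight D z * g (take n z, drop n z)) =
        (\<Sum>p\<in>words n \<times> words n. word_weight D (fst p @ snd p) * g (take n (fst p @ snd p), drop n (fst p @ snd p)))"
    by (subst img[symmetric], subst sum.reindex[OF inj]) (simp add: split_beta)
  also have "\<dots> = pair_mean D n g"
    unfolding pair_mean_def by (intro sum.cong refl) (auto simp: words_def word_weight_append)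
  finally show ?thesis by simp
qed

lemma pair_variance_le:
  fixes D :: "'a::finite pmf"
  assumes bx: "\<And>x y i c. i < length x \<Longrightarrow> \<bar>g (x[i := c], y) - g (x, y)\<bar> \<le> M"
    and by': "\<And>x y i c. i < length y \<Longrightarrow> \<bar>g (x, y[i := c]) - g (x, y)\<bar> \<le> M"
  shows "pair_mean D n (\<lambda>z. (g z)\<^sup>2) - (pair_mean D n g)\<^sup>2 \<le> real (n + n) * M\<^sup>2"
  unfolding pair_mean_append
proof (rule word_variance_le)
  fix z :: "'a list" and k c assume z: "z \<in> words (n + n)" and k: "k < n + n"
  have lz: "length z = n + n" using z by (simp add: words_def)
  show "\<bar>g (take n (z[k := c]), drop n (z[k := c])) - g (take n z, drop n z)\<bar> \<le> M"
  proof (cases "k < n")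
    case True
    then show ?thesis using bx[of k "take n z" c "drop n z"] lz by (simp add: take_update_swap)
  next
    case False
    then show ?thesis using by'[of "k - n" "drop n z" "take n z" c] lz k by (simp add: drop_update_swap)
  qed
qed

lemma variance_opt_score_le:
  fixes D :: "'a::finite pmf"
  assumes K: "\<And>u v. \<bar>S u v\<bar> \<le> K"
  shows "measure_pmf.variance (XY_pmf D n) (\<lambda>(x, y). opt_score S x y) \<le> 32 * K\<^sup>2 * real n"
proof -
  have "measure_pmf.variance (XY_pmf D n) (\<lambda>(x, y). opt_score S x y) \<le> real (n + n) * (4 * K)\<^sup>2"
    unfolding variance_XY_pmf_moments
    by (intro pair_variance_le) (auto intro: opt_score_update_fst[OF K] opt_score_update_snd[OF K])
  then show ?thesis by (simp add: power_mult_distrib mult_ac)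
qed

section \<open>The lower bound\<close>

lemma covariance_imbalance_opt_score_ge:
  fixes D :: "'a::finite pmf"
  assumes ab: "a \<noteq> b" and pb: "pmf D b > 0" and K: "\<And>u v. \<bar>S u v\<bar> \<le> K" and \<Delta>: "\<Delta> > 0"
    and good: "1 - \<Delta> * pmf D a / (2 * (\<Delta> + 4 * K))
                 \<le> measure_pmf.prob (XY_pmf D n) {(x, y). \<Delta> \<le> cond_increment S a b x y}"
  shows "n * \<Delta> * pmf D a
           \<le> pair_mean D n (\<lambda>z. imbalance D a b (fst z) (snd z) * opt_score S (fst z) (snd z))"
proof -
  define N where "N z = real (card (occurrences a (fst z) (snd z)))" for z :: "'a list \<times> 'a list"
  define ci where "ci z = cond_increment S a b (fst z) (snd z)" for z :: "'a list \<times> 'a list"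
  define P where "P = pair_mean D n (\<lambda>z. if \<Delta> \<le> ci z then 1 else 0)"
  have K0: "0 \<le> K" using K[of None None] by linarith
  have "pair_mean D n (indicator {(x, y). \<Delta> \<le> cond_increment S a b x y}) = P"
    unfolding P_def by (intro pair_mean_cong) (auto simp: ci_def indicator_def split_beta)
  then have "(\<Delta> + 4 * K) * (2 * n) * (1 - P) \<le> (\<Delta> + 4 * K) * (2 * n) * (\<Delta> * pmf D a / (2 * (\<Delta> + 4 * K)))"
    using good \<Delta> K0 unfolding prob_XY_pmf by (intro mult_left_mono) auto
  also have "\<dots> = n * \<Delta> * pmf D a"
    using \<Delta> K0 by (simp add: field_simps)
  finally have bad: "(\<Delta> + 4 * K) * (2 * n) * (1 - P) \<le> n * \<Delta> * pmf D a" .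
  have "\<Delta> * pair_mean D n N - (\<Delta> + 4 * K) * (2 * n) * (1 - P) \<le> pair_mean D n (\<lambda>z. N z * ci z)"
    unfolding P_def using \<Delta> card_occurrences_le[of _ n a] abs_cond_increment_le[OF K]
    by (intro pair_mean_mult_ge) (auto simp: N_def ci_def)
  also have "\<dots> = pair_mean D n (\<lambda>z. imbalance D a b (fst z) (snd z) * opt_score S (fst z) (snd z))"
    unfolding N_def ci_def card_mult_cond_increment by (rule pair_mean_replace_occurrences[OF ab pb])
  finally show ?thesis
    using bad unfolding N_def pair_mean_card_occurrences by (simp add: algebra_simps)
qed

lemma variance_opt_score_ge:
  fixes D :: "'a::finite pmf"
  assumes ab: "a \<noteq> b" and pa: "pmf D a > 0" and pb: "pmf D b > 0"
    and K: "\<And>u v. \<bar>S u v\<bar> \<le> K" and \<Delta>: "\<Delta> > 0"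
    and good: "1 - \<Delta> * pmf D a / (2 * (\<Delta> + 4 * K))
                 \<le> measure_pmf.prob (XY_pmf D n) {(x, y). \<Delta> \<le> cond_increment S a b x y}"
  shows "pmf D a * \<Delta>\<^sup>2 / (2 * (pmf D a / pmf D b + 1)) * real n
           \<le> measure_pmf.variance (XY_pmf D n) (\<lambda>(x, y). opt_score S x y)"
proof (cases "n = 0")
  case True
  then show ?thesis by simp
next
  case False
  define r where "r = pmf D a / pmf D b"
  have r0: "0 \<le> r" using pa pb by (simp add: r_def)
  have "(n * \<Delta> * pmf D a)\<^sup>2 / (2 * n * pmf D a * (r + 1))
          \<le> measure_pmf.variance (XY_pmf D n) (\<lambda>z. opt_score S (fst z) (snd z))"
    using False pa r0 \<Delta> covariance_imbalance_opt_score_ge[OF ab pb K \<Delta> good]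
    by (intro variance_ge_covariance[OF pair_mean_imbalance[OF ab pb]])
      (auto simp: pair_mean_imbalance_sq[OF ab pb, folded r_def])
  moreover have "(n * \<Delta> * pmf D a)\<^sup>2 / (2 * n * pmf D a * (r + 1)) = pmf D a * \<Delta>\<^sup>2 / (2 * (r + 1)) * n"
  proof -
    have "(pmf D a * \<Delta>\<^sup>2 / (2 * (r + 1)) * n) * (2 * n * pmf D a * (r + 1)) = (n * \<Delta> * pmf D a)\<^sup>2"
      using r0 by (simp add: field_simps power2_eq_square)
    then show ?thesis using False pa r0 by (simp add: divide_eq_eq)
  qed
  ultimately show ?thesis by (simp add: r_def split_beta')
qed

lemma powr_neg_ln_eventually_le:
  fixes \<alpha> \<epsilon> :: real
  assumes "\<alpha> > 0" "\<epsilon> > 0"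
  shows "\<forall>\<^sub>F n in sequentially. real n powr (- \<alpha> * ln (real n)) \<le> \<epsilon>"
proof -
  have "((\<lambda>n. real n powr (- \<alpha>)) \<longlongrightarrow> 0) sequentially"
    using assms by (intro tendsto_neg_powr filterlim_real_sequentially) auto
  then have ev1: "\<forall>\<^sub>F n in sequentially. real n powr (- \<alpha>) < \<epsilon>"
    using assms by (intro order_tendstoD(2)) auto
  have ev2: "\<forall>\<^sub>F n in sequentially. n \<ge> (3::nat)" by (rule eventually_ge_at_top)
  show ?thesis
  proof (rule eventually_mono[OF eventually_conj[OF ev1 ev2]])
    fix n :: nat assume n: "real n powr (- \<alpha>) < \<epsilon> \<and> 3 \<le> n"
    have "ln (real n) \<ge> ln (exp 1)"
    proof -
      have "exp (1::real) \<le> 3" using exp_le by simp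
      then have "exp 1 \<le> real n" using n by linarith
      then show ?thesis using n by (subst ln_le_cancel_iff) auto
    qed
    then have ln1: "ln (real n) \<ge> 1" by simp
    have "real n powr (- \<alpha> * ln (real n)) \<le> real n powr (- \<alpha>)"
      using n ln1 assms(1) by (intro powr_mono) (auto simp: mult_le_cancel_left1)
    then show "real n powr (- \<alpha> * ln (real n)) \<le> \<epsilon>" using n by linarith
  qed
qed

lemma finite_score_bounded:
  fixes S :: "'a::finite \<Rightarrow> 'a \<Rightarrow> real"
  obtains K where "\<And>u v. \<bar>S u v\<bar> \<le> K"
proof (rule that)
  show "\<bar>S u v\<bar> \<le> (\<Sum>p\<in>UNIV. \<bar>S (fst p) (snd p)\<bar>)" for u v
    using member_le_sum[of "(u, v)" UNIV "\<lambda>p. \<bar>S (fst p) (snd p)\<bar>"] by simp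
qed

theorem mainTheorem2:
  fixes D :: "'a::finite pmf" and S :: "'a option \<Rightarrow> 'a option \<Rightarrow> real"
    and a b :: 'a and \<Delta> \<alpha> :: real
  assumes "a \<noteq> b" and "pmf D a > 0" and "pmf D b > 0"
    and "symmetric_score S"
    and "\<Delta> > 0" and "\<alpha> > 0"
    and "\<forall>\<^sub>F n in sequentially.
           measure_pmf.prob (XY_pmf D n) {(x, y). cond_increment S a b x y \<ge> \<Delta>}
             \<ge> 1 - real n powr (- \<alpha> * ln (real n))"
  shows "\<exists>c C. 0 < c \<and> c \<le> C \<and>
           (\<forall>\<^sub>F n in sequentially.
              c * real n \<le> measure_pmf.variance (XY_pmf D n) (\<lambda>(x, y). opt_score S x y) \<and>
              measure_pmf.variance (XY_pmf D n) (\<lambda>(x, y). opt_score S x y) \<le> C * real n)"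
proof -
  obtain K where K: "\<And>u v. \<bar>S u v\<bar> \<le> K" using finite_score_bounded[of S] by blast
  define \<epsilon> where "\<epsilon> = \<Delta> * pmf D a / (2 * (\<Delta> + 4 * K))"
  define c where "c = pmf D a * \<Delta>\<^sup>2 / (2 * (pmf D a / pmf D b + 1))"
  define C where "C = max c (32 * K\<^sup>2)"
  have "0 < \<epsilon>" using K[of None None] assms(2,5) by (simp add: \<epsilon>_def)
  have good: "\<forall>\<^sub>F n in sequentially.
      1 - \<epsilon> \<le> measure_pmf.prob (XY_pmf D n) {(x, y). \<Delta> \<le> cond_increment S a b x y}"
    using eventually_conj[OF assms(7) powr_neg_ln_eventually_le[OF assms(6) \<open>0 < \<epsilon>\<close>]]
    by (rule eventually_mono) linarith
  have "0 < c"
    unfolding c_def using assms(2,3,5) by (intro divide_pos_pos mult_pos_pos add_nonneg_pos divide_nonneg_nonneg) auto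
  moreover have "\<forall>\<^sub>F n in sequentially.
      c * real n \<le> measure_pmf.variance (XY_pmf D n) (\<lambda>(x, y). opt_score S x y) \<and>
      measure_pmf.variance (XY_pmf D n) (\<lambda>(x, y). opt_score S x y) \<le> C * real n"
  proof (rule eventually_mono[OF good], rule conjI)
    fix n assume "1 - \<epsilon> \<le> measure_pmf.prob (XY_pmf D n) {(x, y). \<Delta> \<le> cond_increment S a b x y}"
    then show "c * real n \<le> measure_pmf.variance (XY_pmf D n) (\<lambda>(x, y). opt_score S x y)"
      unfolding c_def \<epsilon>_def by (rule variance_opt_score_ge[OF assms(1-3) K assms(5)])
    have "32 * K\<^sup>2 * real n \<le> C * real n" by (intro mult_right_mono) (auto simp: C_def)
    then show "measure_pmf.variance (XY_pmf D n) (\<lambda>(x, y). opt_score S x y) \<le> C * real n"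
      using variance_opt_score_le[of S K D n, OF K] by linarith
  qed
  moreover have "c \<le> C" by (simp add: C_def)
  ultimately show ?thesis by blast
qed

end
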